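(* Let $\mathcal V$ be a finite-dimensional vector space over $\mathbb K\in\{\mathbb R,\mathbb C\}$ with norm $\|\cdot\|$, dual space $\mathcal V^\star$, dual norm $\|\cdot\|_\star$, and $\mathrm d_\star(x,y)=\frac12\|x-y\|_\star$. Let $\epsilon,\tau>0$, $z\in\mathcal V^\star$ and $\mu$ a probability measure over $\mathcal V^\star$. Then for every $x\in\mathcal V^\star$, $$\Pr_{y\sim\mu}[\mathrm d_\star(x,y)<\epsilon]\le\max\left\{\mathrm{frac}(\mu,z,\tau),\ \Pr_{y\sim\mu}\left[\mathrm d_\star(y,z)<2\epsilon+\tfrac\tau2\right]\right\},$$ where $\mathrm{frac}(\mu,z,\tau)=\sup_{v\in\overline B_1(0)}\Pr_{y\sim\mu}[|y(v)-z(v)|>\tau]$.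
   Context: $\overline B_1(0)=\{v\in\mathcal V:\|v\|\le1\}$ and $\|x\|_\star=\sup_{\|v\|\le1}|x(v)|$; elements of $\mathcal V^\star$ are evaluated on vectors $v\in\mathcal V$ as linear functionals. *)

theory Defs
  imports "HOL-Analysis.Analysis" "HOL-Probability.Probability"
begin

text \<open>An n-dimensional vector space over K (K = real or complex) is represented in
coordinates as K^n; an arbitrary norm on it is a function N satisfying the norm axioms.\<close>

definition is_norm :: "('k::real_normed_field ^ 'n \<Rightarrow> real) \<Rightarrow> bool" where
  "is_norm N \<longleftrightarrow> (\<forall>v. N v = 0 \<longleftrightarrow> v = 0)
     \<and> (\<forall>c v. N (\<chi> i. c * v $ i) = norm c * N v)
     \<and> (\<forall>u v. N (u + v) \<le> N u + N v)"

text \<open>Elements of the dual space (K-linear functionals on K^n) are represented by their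
coefficient vectors; evaluation of the functional y on the vector v:\<close>

definition dual_eval :: "'k::real_normed_field ^ 'n \<Rightarrow> 'k ^ 'n \<Rightarrow> 'k" where
  "dual_eval y v = (\<Sum>i\<in>UNIV. y $ i * v $ i)"

definition dual_norm :: "('k::real_normed_field ^ 'n \<Rightarrow> real) \<Rightarrow> 'k ^ 'n \<Rightarrow> real" where
  "dual_norm N x = (SUP v\<in>{v. N v \<le> 1}. norm (dual_eval x v))"

definition dstar :: "('k::real_normed_field ^ 'n \<Rightarrow> real) \<Rightarrow> 'k ^ 'n \<Rightarrow> 'k ^ 'n \<Rightarrow> real" where
  "dstar N x y = dual_norm N (x - y) / 2"

definition frac :: "('k::real_normed_field ^ 'n \<Rightarrow> real) \<Rightarrow> ('k ^ 'n) measure \<Rightarrow> 'k ^ 'n \<Rightarrow> real \<Rightarrow> real" where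
  "frac N \<mu> z \<tau> = (SUP v\<in>{v. N v \<le> 1}.
      measure \<mu> {y \<in> space \<mu>. norm (dual_eval y v - dual_eval z v) > \<tau>})"

end

theory Submission
  imports Defs
begin

text \<open>If \<open>\<parallel>x - z\<parallel>\<^sub>\<star> < 2\<epsilon> + \<tau>\<close>, the triangle inequality puts the whole \<open>d\<^sub>\<star>\<close>-ball of radius \<open>\<epsilon>\<close>
  about \<open>x\<close> inside the ball of radius \<open>2\<epsilon> + \<tau>/2\<close> about \<open>z\<close>. Otherwise choose a unit vector \<open>v\<close>
  at which \<open>\<parallel>x - z\<parallel>\<^sub>\<star>\<close> is attained; it exists because all norms on a finite-dimensional space
  are equivalent, so the unit ball is compact. Every \<open>y\<close> in the ball about \<open>x\<close> then satisfies
  \<open>|y(v) - z(v)| \<ge> |(x - z)(v)| - |(x - y)(v)| > (2\<epsilon> + \<tau>) - 2\<epsilon> = \<tau>\<close>, so the ball has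
  probability at most \<open>frac(\<mu>, z, \<tau>)\<close>.\<close>

lemma dual_eval_add: "dual_eval (a + b) v = dual_eval a v + dual_eval b v"
  unfolding dual_eval_def by (simp add: sum.distrib distrib_right)

lemma dual_eval_minus: "dual_eval (- a) v = - dual_eval a v"
  unfolding dual_eval_def by (simp add: sum_negf)

lemma dual_eval_diff: "dual_eval (a - b) v = dual_eval a v - dual_eval b v"
  unfolding dual_eval_def by (simp add: sum_subtractf left_diff_distrib)

lemma continuous_on_dual_eval_left: "continuous_on S (\<lambda>y. dual_eval y v)"
  unfolding dual_eval_def by (intro continuous_intros)

lemma continuous_on_dual_eval_right: "continuous_on S (dual_eval w)"
  unfolding dual_eval_def by (intro continuous_intros)

lemma norm_dual_eval_le:
  fixes w v :: "'k::real_normed_field ^ 'n"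
  shows "norm (dual_eval w v) \<le> real CARD('n) * norm w * norm v"
proof -
  have "norm (dual_eval w v) \<le> (\<Sum>i\<in>UNIV. norm (w $ i * v $ i))"
    unfolding dual_eval_def by (rule norm_sum)
  also have "\<dots> \<le> (\<Sum>i\<in>(UNIV::'n set). norm w * norm v)"
    unfolding norm_mult by (intro sum_mono mult_mono Finite_Cartesian_Product.norm_nth_le) auto
  finally show ?thesis by simp
qed

context
  fixes N :: "'k::{real_normed_field,euclidean_space} ^ 'n \<Rightarrow> real"
  assumes N: "is_norm N"
begin

lemma is_norm_eq_0_iff: "N v = 0 \<longleftrightarrow> v = 0"
  using N unfolding is_norm_def by auto

lemma is_norm_zero [simp]: "N 0 = 0"
  by (simp add: is_norm_eq_0_iff)

lemma is_norm_triangle: "N (u + v) \<le> N u + N v"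
  using N unfolding is_norm_def by auto

lemma is_norm_scaleR: "N (r *\<^sub>R v) = \<bar>r\<bar> * N v"
proof -
  have "(r *\<^sub>R v) $ i = (of_real r :: 'k) * v $ i" for i
    by (simp only: vector_scaleR_component) (rule scaleR_conv_of_real)
  then have "r *\<^sub>R v = (\<chi> i. (of_real r :: 'k) * v $ i)"
    by (simp add: vec_eq_iff)
  then show ?thesis
    using N unfolding is_norm_def by (metis norm_of_real)
qed

lemma is_norm_minus: "N (- v) = N v"
  using is_norm_scaleR[of "-1" v] by simp

lemma is_norm_nonneg: "N v \<ge> 0"
  using is_norm_triangle[of v "- v"] is_norm_minus by simp

lemma is_norm_sum: "finite B \<Longrightarrow> N (\<Sum>b\<in>B. f b) \<le> (\<Sum>b\<in>B. N (f b))"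
  by (induction B rule: finite_induct)
    (auto simp: is_norm_eq_0_iff intro: order_trans[OF is_norm_triangle])

lemma is_norm_le_norm: "N v \<le> (\<Sum>b\<in>Basis. N b) * norm v"
proof -
  have "N v = N (\<Sum>b\<in>Basis. (v \<bullet> b) *\<^sub>R b)"
    by (simp add: euclidean_representation)
  also have "\<dots> \<le> (\<Sum>b\<in>Basis. N ((v \<bullet> b) *\<^sub>R b))"
    by (simp add: is_norm_sum)
  also have "\<dots> = (\<Sum>b\<in>Basis. \<bar>v \<bullet> b\<bar> * N b)"
    by (simp add: is_norm_scaleR)
  also have "\<dots> \<le> (\<Sum>b\<in>Basis. norm v * N b)"
    by (intro sum_mono mult_right_mono Basis_le_norm is_norm_nonneg)
  finally show ?thesis
    by (simp add: sum_distrib_left mult.commute)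
qed

lemma continuous_on_is_norm: "continuous_on S N"
proof (rule lipschitz_on_continuous_on)
  show "(\<Sum>b\<in>Basis. N b)-lipschitz_on S N"
  proof (rule lipschitz_onI)
    fix u v
    have "\<bar>N u - N v\<bar> \<le> N (u - v)"
      using is_norm_triangle[of "u - v" v] is_norm_triangle[of "v - u" u] is_norm_minus[of "u - v"]
      by (simp add: abs_le_iff)
    then show "dist (N u) (N v) \<le> (\<Sum>b\<in>Basis. N b) * dist u v"
      using is_norm_le_norm[of "u - v"] by (simp add: dist_real_def dist_norm)
  qed (simp add: sum_nonneg is_norm_nonneg)
qed

lemma is_norm_ge_norm: obtains m where "m > 0" "\<And>v. m * norm v \<le> N v"
proof -
  obtain b :: "'k ^ 'n" where "b \<in> Basis"
    using nonempty_Basis by blast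
  then have "sphere (0::'k ^ 'n) 1 \<noteq> {}"
    by (auto simp: norm_Basis)
  then obtain u where u: "u \<in> sphere 0 1" "\<And>w. w \<in> sphere 0 1 \<Longrightarrow> N u \<le> N w"
    using continuous_attains_inf[OF compact_sphere _ continuous_on_is_norm] by blast
  have "N u * norm v \<le> N v" for v
  proof (cases "v = 0")
    case False
    then have "N u \<le> N ((1 / norm v) *\<^sub>R v)"
      by (intro u(2)) simp
    with False show ?thesis
      by (simp add: is_norm_scaleR field_simps)
  qed (simp add: is_norm_eq_0_iff)
  moreover have "N u > 0"
    using u(1) is_norm_eq_0_iff[of u] is_norm_nonneg[of u] by auto
  ultimately show ?thesis
    using that by blast
qed

lemma bounded_unit_ball: "bounded {v. N v \<le> 1}"
proof -
  obtain m where m: "m > 0" "\<And>v. m * norm v \<le> N v"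
    using is_norm_ge_norm by blast
  have "norm v \<le> 1 / m" if "N v \<le> 1" for v
    using m(2)[of v] that m(1) by (simp add: field_simps)
  then show ?thesis
    unfolding bounded_iff by blast
qed

lemma compact_unit_ball: "compact {v. N v \<le> 1}"
  using bounded_unit_ball closed_Collect_le[OF continuous_on_is_norm continuous_on_const]
  by (simp add: compact_eq_bounded_closed)

lemma dual_norm_attained:
  obtains v where "N v \<le> 1" "dual_norm N w = norm (dual_eval w v)"
    "\<And>u. N u \<le> 1 \<Longrightarrow> norm (dual_eval w u) \<le> norm (dual_eval w v)"
proof -
  have "0 \<in> {v. N v \<le> 1}"
    by simp
  moreover have "continuous_on {v. N v \<le> 1} (\<lambda>v. norm (dual_eval w v))"
    by (intro continuous_intros continuous_on_dual_eval_right)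
  ultimately obtain v where v: "N v \<le> 1"
      "\<And>u. N u \<le> 1 \<Longrightarrow> norm (dual_eval w u) \<le> norm (dual_eval w v)"
    using continuous_attains_sup[OF compact_unit_ball] by blast
  moreover have "dual_norm N w = norm (dual_eval w v)"
    unfolding dual_norm_def using v by (intro cSup_eq_maximum) auto
  ultimately show ?thesis
    using that by blast
qed

lemma norm_dual_eval_le_dual_norm: "N v \<le> 1 \<Longrightarrow> norm (dual_eval w v) \<le> dual_norm N w"
  by (metis dual_norm_attained)

lemma dual_norm_triangle: "dual_norm N (a + b) \<le> dual_norm N a + dual_norm N b"
proof -
  obtain v where v: "N v \<le> 1" "dual_norm N (a + b) = norm (dual_eval (a + b) v)"
    using dual_norm_attained by blast
  have "norm (dual_eval (a + b) v) \<le> norm (dual_eval a v) + norm (dual_eval b v)"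
    by (simp add: dual_eval_add norm_triangle_ineq)
  also have "\<dots> \<le> dual_norm N a + dual_norm N b"
    using v(1) by (intro add_mono norm_dual_eval_le_dual_norm)
  finally show ?thesis
    using v(2) by simp
qed

lemma dual_norm_minus_commute: "dual_norm N (a - b) = dual_norm N (b - a)"
  using dual_eval_minus[of "a - b"] unfolding dual_norm_def by simp

lemma dual_norm_le_norm: obtains K where "K \<ge> 0" "\<And>w. dual_norm N w \<le> K * norm w"
proof -
  obtain R where R: "\<And>v. N v \<le> 1 \<Longrightarrow> norm v \<le> R"
    using bounded_unit_ball unfolding bounded_iff by blast
  have R_nonneg: "R \<ge> 0"
    using R[of 0] by (simp add: is_norm_eq_0_iff)
  have "dual_norm N w \<le> (real CARD('n) * R) * norm w" for w
  proof -
    obtain v where v: "N v \<le> 1" "dual_norm N w = norm (dual_eval w v)"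
      using dual_norm_attained by blast
    have "norm (dual_eval w v) \<le> real CARD('n) * norm w * norm v"
      by (rule norm_dual_eval_le)
    also have "\<dots> \<le> real CARD('n) * norm w * R"
      using R[OF v(1)] by (intro mult_left_mono) auto
    finally show ?thesis
      using v(2) by (simp add: algebra_simps)
  qed
  with R_nonneg show ?thesis
    using that by (meson mult_nonneg_nonneg of_nat_0_le_iff)
qed

lemma continuous_on_dual_norm: "continuous_on S (dual_norm N)"
proof -
  obtain K where K: "K \<ge> 0" "\<And>w. dual_norm N w \<le> K * norm w"
    using dual_norm_le_norm by blast
  have "K-lipschitz_on S (dual_norm N)"
  proof (rule lipschitz_onI)
    fix a b
    have "dual_norm N a \<le> dual_norm N (a - b) + dual_norm N b"
         "dual_norm N b \<le> dual_norm N (a - b) + dual_norm N a"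
      using dual_norm_triangle[of "a - b" b] dual_norm_triangle[of "b - a" a]
        dual_norm_minus_commute[of a b] by simp_all
    then show "dist (dual_norm N a) (dual_norm N b) \<le> K * dist a b"
      using K(2)[of "a - b"] by (simp add: dist_real_def dist_norm abs_le_iff)
  qed (rule K(1))
  then show ?thesis
    by (rule lipschitz_on_continuous_on)
qed

lemma dstar_ball_subset_near:
  assumes "dual_norm N (x - z) < 2 * \<epsilon> + \<tau>"
  shows "{y. dstar N x y < \<epsilon>} \<subseteq> {y. dstar N y z < 2 * \<epsilon> + \<tau> / 2}"
proof
  fix y
  assume "y \<in> {y. dstar N x y < \<epsilon>}"
  moreover have "dual_norm N (y - z) \<le> dual_norm N (x - y) + dual_norm N (x - z)"
    using dual_norm_triangle[of "y - x" "x - z"] dual_norm_minus_commute[of x y] by simp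
  ultimately show "y \<in> {y. dstar N y z < 2 * \<epsilon> + \<tau> / 2}"
    using assms by (simp add: dstar_def)
qed

lemma dstar_ball_subset_far:
  assumes "2 * \<epsilon> + \<tau> \<le> norm (dual_eval (x - z) v)" and "N v \<le> 1"
  shows "{y. dstar N x y < \<epsilon>} \<subseteq> {y. \<tau> < norm (dual_eval y v - dual_eval z v)}"
proof
  fix y
  assume "y \<in> {y. dstar N x y < \<epsilon>}"
  then have "norm (dual_eval (x - y) v) < 2 * \<epsilon>"
    using norm_dual_eval_le_dual_norm[OF assms(2), of "x - y"] by (simp add: dstar_def)
  moreover have "norm (dual_eval (x - z) v) - norm (dual_eval (x - y) v)
      \<le> norm (dual_eval y v - dual_eval z v)"
    using norm_triangle_ineq2[of "dual_eval (x - z) v" "dual_eval (x - y) v"]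
    by (simp add: dual_eval_diff)
  ultimately show "y \<in> {y. \<tau> < norm (dual_eval y v - dual_eval z v)}"
    using assms(1) by simp
qed

lemma measure_dstar_ball_le_max_frac:
  fixes \<mu> :: "('k ^ 'n) measure"
  assumes \<mu>: "prob_space \<mu>" "sets \<mu> = sets borel"
  shows "measure \<mu> {y \<in> space \<mu>. dstar N x y < \<epsilon>}
           \<le> max (frac N \<mu> z \<tau>) (measure \<mu> {y \<in> space \<mu>. dstar N y z < 2 * \<epsilon> + \<tau> / 2})"
proof -
  interpret prob_space \<mu> by (rule \<mu>(1))
  have space: "space \<mu> = UNIV"
    using sets_eq_imp_space_eq[OF \<mu>(2)] by simp
  have open_sets: "open S \<Longrightarrow> S \<in> sets \<mu>" for S
    using \<mu>(2) by simp
  show ?thesis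
  proof (cases "dual_norm N (x - z) < 2 * \<epsilon> + \<tau>")
    case True
    have "open {y. dstar N y z < 2 * \<epsilon> + \<tau> / 2}"
      unfolding dstar_def
      by (intro open_Collect_less continuous_intros continuous_on_compose2[OF continuous_on_dual_norm])
        auto
    then have "measure \<mu> {y. dstar N x y < \<epsilon>} \<le> measure \<mu> {y. dstar N y z < 2 * \<epsilon> + \<tau> / 2}"
      by (intro finite_measure_mono open_sets dstar_ball_subset_near[OF True])
    then show ?thesis
      by (simp add: space)
  next
    case False
    obtain v where v: "N v \<le> 1" "dual_norm N (x - z) = norm (dual_eval (x - z) v)"
      using dual_norm_attained by blast
    have "open {y. \<tau> < norm (dual_eval y v - dual_eval z v)}"
      by (intro open_Collect_less continuous_intros continuous_on_dual_eval_left)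
    then have "measure \<mu> {y. dstar N x y < \<epsilon>}
        \<le> measure \<mu> {y. \<tau> < norm (dual_eval y v - dual_eval z v)}"
      using False v by (intro finite_measure_mono open_sets dstar_ball_subset_far) auto
    also have "\<dots> \<le> frac N \<mu> z \<tau>"
      unfolding frac_def space using v(1)
      by (intro cSUP_upper2 bdd_aboveI2[where M = 1]) auto
    finally show ?thesis
      by (simp add: space)
  qed
qed

end

theorem mainTheorem7:
  shows "(\<forall>(N :: real ^ 'n \<Rightarrow> real) (\<mu> :: (real ^ 'n) measure) \<epsilon> \<tau> z x.
            is_norm N \<and> prob_space \<mu> \<and> sets \<mu> = sets borel \<and> \<epsilon> > 0 \<and> \<tau> > 0 \<longrightarrow>
            measure \<mu> {y \<in> space \<mu>. dstar N x y < \<epsilon>}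
              \<le> max (frac N \<mu> z \<tau>)
                     (measure \<mu> {y \<in> space \<mu>. dstar N y z < 2 * \<epsilon> + \<tau> / 2}))
       \<and> (\<forall>(N :: complex ^ 'm \<Rightarrow> real) (\<mu> :: (complex ^ 'm) measure) \<epsilon> \<tau> z x.
            is_norm N \<and> prob_space \<mu> \<and> sets \<mu> = sets borel \<and> \<epsilon> > 0 \<and> \<tau> > 0 \<longrightarrow>
            measure \<mu> {y \<in> space \<mu>. dstar N x y < \<epsilon>}
              \<le> max (frac N \<mu> z \<tau>)
                     (measure \<mu> {y \<in> space \<mu>. dstar N y z < 2 * \<epsilon> + \<tau> / 2}))"
  by (blast intro: measure_dstar_ball_le_max_frac)

end
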